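(* Let $k\ge 1$ and $n=2^{k+1}-1$, and let $\Delta=3$, so that $T_{n,3}$ is the complete binary tree of height $k$ with all levels full. Then in every execution of the traversal procedure on $T_{n,3}$, the number of jump edges added in step (c) (not counting the final closing edge $\{v_n,1\}$) is the same, namely $$\sum_{i=0}^{k-1} f(i)+k=\frac{f(k+1)}{2}=\Bigl\lfloor \frac{n}{3}\Bigr\rfloor,$$ where $f$ is the function defined by $f(0)=0$ and $f(m)=2(m-1)+2\sum_{i=0}^{m-2}f(i)$ for $m\ge 1$.
   Context: Fix integers $\Delta\ge 3$ and $n\ge 3$, and put $b=\Delta-1$. The complete $\Delta$-ary tree $T_{n,\Delta}$ is the rooted tree on vertex set $\{1,\dots,n\}$ with root $1$ in which the children of a vertex $i$ are the integers $j$ with $b(i-1)+2\le j\le bi+1$ and $j\le n$ (equivalently, the parent of $j\ge 2$ is $\lfloor (j-2)/b\rfloor+1$). Thus every vertex has at most $\Delta-1$ children, all levels except possibly the last are full, and the last level is filled from the left. A leaf is a vertex other than the root having no children. Traversal procedure: start with edge set $E$ equal to the edge set of $T_{n,\Delta}$, all vertices unmarked, and $v_1=1$. For $k=1,\dots,n-1$: mark $v_k$; then (a) if $v_k\neq 1$ and the parent of $v_k$ is unmarked, let $v_{k+1}$ be the parent of $v_k$; (b) otherwise, if $v_k$ has an unmarked child, let $v_{k+1}$ be any unmarked child of $v_k$; (c) otherwise, let $v_{k+1}$ be any unmarked leaf $u$ and add the edge $\{v_k,u\}$ to $E$ (a "jump edge"). Finally mark $v_n$ and add the edge $\{v_n,1\}$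 to $E$ (if not already present). The output is the simple graph $G=(\{1,\dots,n\},E)$. An execution is any run of this procedure, i.e. any admissible sequence of choices in (b) and (c). *)

theory Defs
  imports Main
begin

(* Complete Delta-ary tree T_{n,Delta} on {1..n}, root 1, with b = Delta - 1. *)

definition tparent :: "nat \<Rightarrow> nat \<Rightarrow> nat" where
  "tparent b j = (j - 2) div b + 1"

definition tchild :: "nat \<Rightarrow> nat \<Rightarrow> nat \<Rightarrow> nat \<Rightarrow> bool" where
  "tchild n b i j \<longleftrightarrow> b * (i - 1) + 2 \<le> j \<and> j \<le> b * i + 1 \<and> j \<le> n"

definition tleaf :: "nat \<Rightarrow> nat \<Rightarrow> nat \<Rightarrow> bool" where
  "tleaf n b u \<longleftrightarrow> u \<in> {2..n} \<and> \<not> (\<exists>j. tchild n b u j)"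

definition case_a :: "nat \<Rightarrow> nat set \<Rightarrow> nat \<Rightarrow> bool" where
  "case_a b M x \<longleftrightarrow> x \<noteq> 1 \<and> tparent b x \<notin> M"

(* case (b) applies (given (a) does not) *)
definition case_b :: "nat \<Rightarrow> nat \<Rightarrow> nat set \<Rightarrow> nat \<Rightarrow> bool" where
  "case_b n b M x \<longleftrightarrow> (\<exists>j. tchild n b x j \<and> j \<notin> M)"

definition trav_step :: "nat \<Rightarrow> nat \<Rightarrow> nat set \<Rightarrow> nat \<Rightarrow> nat \<Rightarrow> bool" where
  "trav_step n b M x y \<longleftrightarrow>
     (if case_a b M x then y = tparent b x
      else if case_b n b M x then tchild n b x y \<and> y \<notin> M
      else tleaf n b y \<and> y \<notin> M)"

definition is_jump :: "nat \<Rightarrow> nat \<Rightarrow> nat set \<Rightarrow> nat \<Rightarrow> bool" where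
  "is_jump n b M x \<longleftrightarrow> \<not> case_a b M x \<and> \<not> case_b n b M x"

(* v 1, ..., v n is an execution of the traversal procedure on T_{n,Delta};
   after marking v_k, the marked set is {v_1,...,v_k} *)
definition execution :: "nat \<Rightarrow> nat \<Rightarrow> (nat \<Rightarrow> nat) \<Rightarrow> bool" where
  "execution n Delta v \<longleftrightarrow> v 1 = 1 \<and>
     (\<forall>k\<in>{1..n-1}. trav_step n (Delta - 1) (v ` {1..k}) (v k) (v (Suc k)))"

definition num_jumps :: "nat \<Rightarrow> nat \<Rightarrow> (nat \<Rightarrow> nat) \<Rightarrow> nat" where
  "num_jumps n Delta v = card {k\<in>{1..n-1}. is_jump n (Delta - 1) (v ` {1..k}) (v k)}"

fun fseq :: "nat \<Rightarrow> nat" where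
  "fseq 0 = 0"
| "fseq (Suc m) = 2 * m + 2 * (\<Sum>i<m. fseq i)"

end

theory Submission
  imports Defs "HOL-Library.Discrete_Functions"
begin

(* For Delta = 3 the tree T_{n,3} with n = 2^(k+1) - 1 is the heap-ordered complete
   binary tree: the parent of j is j div 2, the children of u are 2u and 2u+1, and
   the height of u is k - floor_log u.  The number of jumps is independent of the
   choices made because it is governed by a potential: to a state (marked set M,
   current vertex x) we assign the sum of subtree_cost (height u) over all unmarked
   vertices u with a marked parent (the frontier), plus a correction depending only
   on which of the cases (a), (b), (c) applies at x.  Every step (a) or (b) leaves
   the potential unchanged and every jump (c) lowers it by exactly one.  The
   potential is path_cost k initially and 0 once every vertex is marked, so every
   execution makes path_cost k jumps.  Here subtree_cost h = fseq h + 1 and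
   path_cost h is its partial sum; the recursion of fseq turns path_cost k into the
   three expressions of the theorem, the last one via a closed form in powers of 2. *)

lemma tparent_binary: "j \<ge> 2 \<Longrightarrow> tparent 2 j = j div 2"
  unfolding tparent_def by presburger

lemma tchild_binary: "tchild n 2 y c \<longleftrightarrow> y \<ge> 1 \<and> (c = 2 * y \<or> c = 2 * y + 1) \<and> c \<le> n"
  unfolding tchild_def by (cases y) auto

lemma count_by_potential:
  fixes P :: "nat \<Rightarrow> int" and J :: "nat \<Rightarrow> bool"
  assumes "N \<ge> 1"
    and step: "\<And>j. 1 \<le> j \<Longrightarrow> j < N \<Longrightarrow> P (Suc j) + (if J j then 1 else 0) = P j"
  shows "P N + int (card {j \<in> {1..<N}. J j}) = P 1"
  using assms(1) step
proof (induction N rule: nat_induct_at_least)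
  case base
  then show ?case by simp
next
  case (Suc N)
  have split: "{j \<in> {1..<Suc N}. J j} = {j \<in> {1..<N}. J j} \<union> (if J N then {N} else {})"
    using Suc.hyps less_Suc_eq by auto
  have card_split: "card {j \<in> {1..<Suc N}. J j} = card {j \<in> {1..<N}. J j} + (if J N then 1 else 0)"
    unfolding split by (simp add: card_insert_if)
  have IH: "P N + int (card {j \<in> {1..<N}. J j}) = P 1" using Suc.IH Suc.prems by simp
  have "P (Suc N) + (if J N then 1 else 0) = P N" using Suc.prems Suc.hyps by simp
  then show ?case using IH card_split by (cases "J N") simp_all
qed

(* subtree_cost h is the number of jumps charged to an unvisited complete subtree
   of height h hanging below a visited vertex; path_cost h is the sum of these over all
   smaller heights. *)
definition subtree_cost :: "nat \<Rightarrow> int" where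
  "subtree_cost h = int (fseq h) + 1"

definition path_cost :: "nat \<Rightarrow> int" where
  "path_cost h = (\<Sum>i<h. subtree_cost i)"

lemma path_cost_0 [simp]: "path_cost 0 = 0"
  by (simp add: path_cost_def)

lemma path_cost_Suc: "path_cost (Suc h) = path_cost h + subtree_cost h"
  by (simp add: path_cost_def)

lemma subtree_cost_0 [simp]: "subtree_cost 0 = 1"
  by (simp add: subtree_cost_def)

lemma path_cost_eq: "path_cost h = int ((\<Sum>i<h. fseq i) + h)"
  by (simp add: path_cost_def subtree_cost_def sum.distrib)

lemma fseq_Suc_eq: "int (fseq (Suc h)) = 2 * path_cost h"
  by (simp add: path_cost_eq)

lemma subtree_cost_Suc: "subtree_cost (Suc h) = 1 + 2 * path_cost h"
  using fseq_Suc_eq[of h] by (simp add: subtree_cost_def)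

lemma path_cost_closed_form:
  "3 * path_cost h = 2 ^ (h + 1) - 1 - (if even h then 1 else 0)"
proof -
  have "3 * path_cost h = 2 ^ (h + 1) - 1 - (if even h then 1 else 0) \<and>
        3 * subtree_cost h = 2 ^ (h + 1) + (if even h then 1 else -1)"
    by (induction h) (auto simp: path_cost_Suc subtree_cost_Suc algebra_simps)
  then show ?thesis ..
qed

context
  fixes k n :: nat
  assumes n_eq: "n = 2 ^ (k + 1) - 1"
begin

(* n is odd, so a vertex u with 2u <= n also has its second child 2u + 1. *)
lemma odd_n: "odd n"
  using n_eq by simp

(* floor_log u is the depth of vertex u; no vertex lies deeper than k. *)
lemma floor_log_le_k: "u \<in> {1..n} \<Longrightarrow> floor_log u \<le> k"
proof -
  assume u: "u \<in> {1..n}"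
  have "2 ^ floor_log u \<le> u" using u floor_log_exp2_le by auto
  also have "u < 2 ^ Suc k" using u n_eq by auto
  finally have "floor_log u < Suc k" by (rule nat_power_less_imp_less[rotated]) simp
  then show ?thesis by simp
qed

lemma double_le_n_iff: "u \<ge> 1 \<Longrightarrow> 2 * u \<le> n \<longleftrightarrow> floor_log u < k"
proof -
  assume u: "u \<ge> 1"
  have "(0::nat) < 2 ^ k" by simp
  then have "2 * u \<le> n \<longleftrightarrow> u < 2 ^ k"
    unfolding n_eq by (simp only: power_Suc Suc_eq_plus1[symmetric]) linarith
  also have "\<dots> \<longleftrightarrow> floor_log u < k"
  proof
    assume "u < 2 ^ k"
    moreover have "2 ^ floor_log u \<le> u" using u floor_log_exp2_le by simp
    ultimately have "2 ^ floor_log u < (2::nat) ^ k" by linarith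
    then show "floor_log u < k" by (rule nat_power_less_imp_less[rotated]) simp
  next
    assume "floor_log u < k"
    then have "2 * 2 ^ floor_log u \<le> (2::nat) ^ k"
      using power_increasing[of "Suc (floor_log u)" k "2::nat"] by simp
    then show "u < 2 ^ k" using floor_log_exp2_gt[of u] by simp
  qed
  finally show ?thesis .
qed

definition height :: "nat \<Rightarrow> nat" where
  "height u = k - floor_log u"

lemma height_parent: "u \<in> {2..n} \<Longrightarrow> height (u div 2) = Suc (height u)"
  using floor_log_rec[of u] floor_log_le_k[of u] unfolding height_def by auto

definition children :: "nat \<Rightarrow> nat set" where
  "children y = {c \<in> {2..n}. c div 2 = y}"

lemma tchild_iff_children: "y \<ge> 1 \<Longrightarrow> tchild n 2 y c \<longleftrightarrow> c \<in> children y"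
  unfolding tchild_binary children_def by auto

lemma children_eq:
  assumes "y \<in> {1..n}"
  shows "children y = (if height y = 0 then {} else {2 * y, 2 * y + 1})"
proof -
  have "2 * y \<le> n \<longleftrightarrow> height y \<noteq> 0"
    using double_le_n_iff[of y] floor_log_le_k[of y] assms unfolding height_def by auto
  moreover have "2 * y \<noteq> n" using odd_n by auto
  ultimately show ?thesis using assms unfolding children_def by auto
qed

lemma height_child: "c \<in> children y \<Longrightarrow> height y = Suc (height c)"
  using height_parent unfolding children_def by auto

lemma tleaf_iff_height: "tleaf n 2 y \<longleftrightarrow> y \<in> {2..n} \<and> height y = 0"
proof (cases "y \<in> {2..n}")
  case True
  then have "(\<exists>c. tchild n 2 y c) \<longleftrightarrow> children y \<noteq> {}"
    using tchild_iff_children[of y] by auto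
  then show ?thesis using True children_eq[of y] unfolding tleaf_def by auto
qed (auto simp: tleaf_def)

lemma case_a_iff: "x \<ge> 1 \<Longrightarrow> case_a 2 M x \<longleftrightarrow> x \<ge> 2 \<and> x div 2 \<notin> M"
  unfolding case_a_def using tparent_binary by auto

lemma case_b_iff: "x \<ge> 1 \<Longrightarrow> case_b n 2 M x \<longleftrightarrow> children x - M \<noteq> {}"
  unfolding case_b_def using tchild_iff_children by auto

definition frontier :: "nat set \<Rightarrow> nat set" where
  "frontier M = {u \<in> {2..n}. u \<notin> M \<and> u div 2 \<in> M}"

definition frontier_cost :: "nat set \<Rightarrow> int" where
  "frontier_cost M = (\<Sum>u\<in>frontier M. subtree_cost (height u))"

(* Correction for the current vertex x: while climbing (case (a)) or descending
   (case (b)) the walk reaches unmarked vertices without jumping, so the frontier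
   sum is adjusted by the amount these moves save or defer. *)
definition position_cost :: "nat set \<Rightarrow> nat \<Rightarrow> int" where
  "position_cost M x =
     (if case_a 2 M x then - 1 - path_cost (height x)
      else if case_b n 2 M x then path_cost (height x - 1) - subtree_cost (height x - 1)
      else 0)"

(* The potential of a state: the number of jumps that are still to come. *)
definition potential :: "nat set \<Rightarrow> nat \<Rightarrow> int" where
  "potential M x = frontier_cost M + position_cost M x"

(* Invariant of every reachable state: the marked set contains the root and the
   current vertex, and is closed under taking parents except at the current vertex
   (only an upward move can leave a marked vertex with an unmarked parent). *)
definition traversal_inv :: "nat set \<Rightarrow> nat \<Rightarrow> bool" where
  "traversal_inv M x \<longleftrightarrow> M \<subseteq> {1..n} \<and> 1 \<in> M \<and> x \<in> M \<and>
     (\<forall>u\<in>M. u \<noteq> 1 \<and> u \<noteq> x \<longrightarrow> u div 2 \<in> M)"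

lemma frontier_cost_insert:
  assumes "y \<in> {2..n}" "y \<notin> M"
  shows "frontier_cost (insert y M) = frontier_cost M
           - (if y div 2 \<in> M then subtree_cost (height y) else 0)
           + (\<Sum>c\<in>children y - M. subtree_cost (height c))"
proof -
  let ?g = "\<lambda>u. subtree_cost (height u)"
  have y_parent: "y div 2 \<noteq> y" using assms(1) by auto
  have "frontier (insert y M) = (frontier M - {y}) \<union> (children y - M)"
    using assms y_parent unfolding frontier_def children_def by auto
  moreover have "(frontier M - {y}) \<inter> (children y - M) = {}"
    using assms unfolding frontier_def children_def by auto
  moreover have "finite (frontier M)" "finite (children y)"
    unfolding frontier_def children_def by auto
  ultimately have "frontier_cost (insert y M) = sum ?g (frontier M - {y}) + sum ?g (children y - M)"
    unfolding frontier_cost_def by (simp add: sum.union_disjoint)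
  moreover have "sum ?g (frontier M - {y}) = frontier_cost M - (if y \<in> frontier M then ?g y else 0)"
    unfolding frontier_cost_def using \<open>finite (frontier M)\<close> by (simp add: sum_diff1)
  moreover have "y \<in> frontier M \<longleftrightarrow> y div 2 \<in> M"
    using assms unfolding frontier_def by auto
  ultimately show ?thesis by simp
qed

lemma unmarked_below_unmarked:
  assumes "traversal_inv M x" "y \<notin> M" "c \<in> children y" "c \<noteq> x"
  shows "c \<notin> M"
  using assms unfolding traversal_inv_def children_def by auto

lemma trav_step_cases:
  assumes "trav_step n 2 M x y" "x \<ge> 1"
  obtains (up) "case_a 2 M x" "y = x div 2"
    | (down) "\<not> case_a 2 M x" "y \<in> children x - M"
    | (jump) "\<not> case_a 2 M x" "\<not> case_b n 2 M x" "tleaf n 2 y" "y \<notin> M"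
proof (cases "case_a 2 M x")
  case True
  then have "y = x div 2"
    using assms tparent_binary[of x] case_a_iff[of x M] unfolding trav_step_def by simp
  then show ?thesis using True up by blast
next
  case False
  show ?thesis
  proof (cases "case_b n 2 M x")
    case True
    then have "y \<in> children x - M"
      using assms False tchild_iff_children[of x y] unfolding trav_step_def by simp
    then show ?thesis using False down by blast
  next
    case no_b: False
    then have "tleaf n 2 y" "y \<notin> M" using assms False unfolding trav_step_def by simp_all
    then show ?thesis using False no_b jump by blast
  qed
qed

lemma step_invariant:
  assumes inv: "traversal_inv M x" and step: "trav_step n 2 M x y"
  shows "y \<notin> M \<and> y \<in> {1..n} \<and> traversal_inv (insert y M) y"
proof -
  have x: "x \<in> {1..n}" using inv unfolding traversal_inv_def by auto
  then have "x \<ge> 1" by simp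
  with step show ?thesis
  proof (cases rule: trav_step_cases)
    case up
    then have "y \<notin> M" "y \<in> {1..n}" using x case_a_iff[of x M] by auto
    then show ?thesis using inv up unfolding traversal_inv_def by auto
  next
    case down
    then have "x = 1 \<or> x div 2 \<in> M" using x case_a_iff[of x M] by auto
    then show ?thesis using inv down unfolding traversal_inv_def children_def by auto
  next
    case jump
    then have "x = 1 \<or> x div 2 \<in> M" using x case_a_iff[of x M] by auto
    then show ?thesis using inv jump unfolding traversal_inv_def tleaf_iff_height by auto
  qed
qed

(* The new vertex y has the current vertex
   and one unmarked sibling as children; whether y itself was on the frontier
   decides which correction applies at y. *)
lemma potential_up:
  assumes inv: "traversal_inv M x" and up: "case_a 2 M x"
  shows "potential (insert (x div 2) M) (x div 2) = potential M x"
proof -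
  define y where "y = x div 2"
  define h where "h = height x"
  have x: "x \<in> {2..n}" "x \<in> M" and y_unmarked: "y \<notin> M" and "1 \<in> M"
    using inv up case_a_iff[of x M] unfolding traversal_inv_def y_def by auto
  then have "y \<noteq> 1" "y \<ge> 1" "y \<le> n" unfolding y_def by auto
  then have y: "y \<in> {2..n}" by simp
  have x_child: "x \<in> children y" using x unfolding children_def y_def by simp
  have hy: "height y = Suc h" using height_child[OF x_child] unfolding h_def .
  define s where "s = (if x = 2 * y then 2 * y + 1 else 2 * y)"
  have children_y: "children y = {x, s}"
    using children_eq[of y] y hy x_child unfolding s_def by auto
  then have s_child: "s \<in> children y" and "s \<noteq> x" unfolding s_def by auto
  then have "s \<notin> M" using unmarked_below_unmarked[OF inv y_unmarked] by blast
  then have sibling_only: "children y - M = {s}" using children_y x by auto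
  have hs: "height s = h" using height_child[OF s_child] hy by simp
  have "s \<noteq> y" using s_child unfolding children_def by auto
  then have new_children: "children y - insert y M \<noteq> {}" using sibling_only by auto
  have frontier: "frontier_cost (insert y M) = frontier_cost M
      - (if y div 2 \<in> M then subtree_cost (Suc h) else 0) + subtree_cost h"
    using frontier_cost_insert[OF y y_unmarked] sibling_only hy hs by simp
  have old: "position_cost M x = - 1 - path_cost h"
    using up unfolding position_cost_def h_def by simp
  show ?thesis
  proof (cases "y div 2 \<in> M")
    case True
    have "\<not> case_a 2 (insert y M) y" using True y case_a_iff[of y] by simp
    moreover have "case_b n 2 (insert y M) y" using new_children y case_b_iff[of y] by simp
    ultimately have "position_cost (insert y M) y = path_cost h - subtree_cost h"
      unfolding position_cost_def using hy by simp
    then show ?thesis using frontier old True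
      unfolding potential_def y_def[symmetric] by (simp add: subtree_cost_Suc)
  next
    case False
    moreover have "y div 2 \<noteq> y" using y by auto
    ultimately have "case_a 2 (insert y M) y" using y case_a_iff[of y] by simp
    then have "position_cost (insert y M) y = - 1 - path_cost (Suc h)"
      unfolding position_cost_def using hy by simp
    then show ?thesis using frontier old False
      unfolding potential_def y_def[symmetric] by (simp add: path_cost_Suc)
  qed
qed

(* A downward move (b) keeps the potential: the child y leaves the frontier and its
   children (if any) join it. *)
lemma potential_down:
  assumes inv: "traversal_inv M x" and not_up: "\<not> case_a 2 M x"
    and down: "y \<in> children x - M"
  shows "potential (insert y M) y = potential M x"
proof -
  define h where "h = height y"
  have x: "x \<in> {1..n}" "x \<in> M" using inv unfolding traversal_inv_def by auto
  have y: "y \<in> {2..n}" "y div 2 = x" "y \<notin> M" using down unfolding children_def by auto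
  have hx: "height x = Suc h" using height_child down unfolding h_def by simp
  have "children y - M = children y"
    using unmarked_below_unmarked[OF inv \<open>y \<notin> M\<close>] y unfolding children_def by auto
  then have frontier: "frontier_cost (insert y M) = frontier_cost M - subtree_cost h
      + (\<Sum>c\<in>children y. subtree_cost (height c))"
    using frontier_cost_insert[of y M] y x unfolding h_def by simp
  have "case_b n 2 M x" using down x case_b_iff[of x M] by auto
  then have old: "position_cost M x = path_cost h - subtree_cost h"
    using not_up hx unfolding position_cost_def by simp
  have y_not_up: "\<not> case_a 2 (insert y M) y" using y x case_a_iff[of y] by simp
  show ?thesis
  proof (cases h)
    case 0
    then have "children y = {}" using children_eq[of y] y unfolding h_def by simp
    then have "position_cost (insert y M) y = 0"
      using y_not_up y case_b_iff[of y] unfolding position_cost_def by simp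
    then show ?thesis using frontier old 0 \<open>children y = {}\<close> unfolding potential_def by simp
  next
    case (Suc m)
    then have children_y: "children y = {2 * y, 2 * y + 1}"
      using children_eq[of y] y unfolding h_def by simp
    then have "height c = m" if "c \<in> children y" for c
      using height_child[OF that] Suc unfolding h_def by simp
    then have below: "(\<Sum>c\<in>children y. subtree_cost (height c)) = 2 * subtree_cost m"
      using children_y by simp
    have "children y - insert y M \<noteq> {}"
      using children_y \<open>children y - M = children y\<close> y by auto
    then have "position_cost (insert y M) y = path_cost m - subtree_cost m"
      using y_not_up y case_b_iff[of y] Suc unfolding position_cost_def h_def by simp
    then show ?thesis using frontier old below Suc
      unfolding potential_def by (simp add: subtree_cost_Suc path_cost_Suc)
  qed
qed

lemma potential_jump:
  assumes inv: "traversal_inv M x" and not_up: "\<not> case_a 2 M x"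
    and not_down: "\<not> case_b n 2 M x" and leaf: "tleaf n 2 y" and fresh: "y \<notin> M"
  shows "potential (insert y M) y = potential M x - 1"
proof -
  have y: "y \<in> {2..n}" "height y = 0" using leaf tleaf_iff_height by auto
  then have no_children: "children y = {}" using children_eq[of y] by simp
  have frontier: "frontier_cost (insert y M) = frontier_cost M - (if y div 2 \<in> M then 1 else 0)"
    using frontier_cost_insert[OF y(1) fresh] y no_children by simp
  have old: "position_cost M x = 0" using not_up not_down unfolding position_cost_def by simp
  have "\<not> case_b n 2 (insert y M) y" using y no_children case_b_iff[of y] by simp
  moreover have "y div 2 \<noteq> y" using y by auto
  ultimately have "position_cost (insert y M) y = (if y div 2 \<in> M then 0 else - 1)"
    using y case_a_iff[of y] unfolding position_cost_def by simp
  then show ?thesis using frontier old unfolding potential_def by simp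
qed

lemma potential_step:
  assumes inv: "traversal_inv M x" and step: "trav_step n 2 M x y"
  shows "potential (insert y M) y + (if is_jump n 2 M x then 1 else 0) = potential M x"
proof -
  have "x \<ge> 1" using inv unfolding traversal_inv_def by auto
  with step show ?thesis
  proof (cases rule: trav_step_cases)
    case up
    then show ?thesis using potential_up[OF inv] unfolding is_jump_def by simp
  next
    case down
    then have "case_b n 2 M x" using \<open>x \<ge> 1\<close> case_b_iff[of x M] by auto
    then show ?thesis using down potential_down[OF inv] unfolding is_jump_def by simp
  next
    case jump
    then show ?thesis using potential_jump[OF inv] unfolding is_jump_def by simp
  qed
qed

(* Initially only the root is marked and its two children form the frontier. *)
lemma potential_initial:
  assumes "k \<ge> 1"
  shows "potential {1} 1 = path_cost k"
proof -
  obtain m where k: "k = Suc m" using assms by (cases k) auto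
  have "n \<ge> 3" using n_eq power_increasing[of 2 "k + 1" "2::nat"] assms by simp
  then have children_1: "children 1 = {2, 3}" unfolding children_def by auto
  have "height 1 = Suc m" unfolding height_def using k by simp
  then have "height c = m" if "c \<in> children 1" for c using height_child[OF that] by simp
  then have heights: "height 2 = m" "height 3 = m" using children_1 by auto
  have "frontier {1} = {2, 3}" using children_1 unfolding frontier_def children_def by auto
  then have "frontier_cost {1} = 2 * subtree_cost m" unfolding frontier_cost_def using heights by simp
  moreover have "case_b n 2 {1} 1" using children_1 case_b_iff[of 1] by simp
  then have "position_cost {1} 1 = path_cost m - subtree_cost m"
    using case_a_iff[of 1] \<open>height 1 = Suc m\<close> unfolding position_cost_def by simp
  ultimately show ?thesis unfolding potential_def using k by (simp add: path_cost_Suc)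
qed

lemma potential_final:
  assumes "x \<in> {1..n}"
  shows "potential {1..n} x = 0"
proof -
  have "frontier {1..n} = {}" unfolding frontier_def by auto
  moreover have "\<not> case_a 2 {1..n} x"
  proof -
    have "x div 2 \<in> {1..n}" if "x \<ge> 2" using assms that by auto
    then show ?thesis using assms case_a_iff[of x] by auto
  qed
  moreover have "children x - {1..n} = {}" unfolding children_def by auto
  then have "\<not> case_b n 2 {1..n} x" using assms case_b_iff[of x] by simp
  ultimately show ?thesis unfolding potential_def frontier_cost_def position_cost_def by simp
qed

lemma execution_inv:
  assumes exec: "execution n 3 v" and "1 \<le> K" "K \<le> n"
  shows "traversal_inv (v ` {1..K}) (v K) \<and> card (v ` {1..K}) = K"
  using assms(2,3)
proof (induction K rule: nat_induct_at_least)
  case base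
  then show ?case using exec unfolding execution_def traversal_inv_def by simp
next
  case (Suc K)
  then have IH: "traversal_inv (v ` {1..K}) (v K)" "card (v ` {1..K}) = K" by auto
  have "trav_step n 2 (v ` {1..K}) (v K) (v (Suc K))"
    using exec Suc unfolding execution_def by simp
  note new = step_invariant[OF IH(1) this]
  have "v ` {1..Suc K} = insert (v (Suc K)) (v ` {1..K})"
    using Suc.hyps by (auto simp: atLeastAtMostSuc_conv)
  then show ?case using new IH(2) by (simp add: card_insert_disjoint)
qed

lemma execution_marks_all:
  assumes exec: "execution n 3 v" and "n \<ge> 1"
  shows "v ` {1..n} = {1..n}"
proof -
  have "traversal_inv (v ` {1..n}) (v n)" "card (v ` {1..n}) = n"
    using execution_inv[OF exec, of n] assms(2) by auto
  then show ?thesis using card_subset_eq[of "{1..n}"] unfolding traversal_inv_def by simp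
qed

lemma num_jumps_eq_path_cost:
  assumes "k \<ge> 1" and exec: "execution n 3 v"
  shows "int (num_jumps n 3 v) = path_cost k"
proof -
  define P where "P K = potential (v ` {1..K}) (v K)" for K
  define J where "J K = is_jump n 2 (v ` {1..K}) (v K)" for K
  have "n \<ge> 1" using odd_pos[OF odd_n] by simp
  have "P (Suc K) + (if J K then 1 else 0) = P K" if "1 \<le> K" "K < n" for K
  proof -
    have "traversal_inv (v ` {1..K}) (v K)" using execution_inv[OF exec] that by simp
    moreover have "trav_step n 2 (v ` {1..K}) (v K) (v (Suc K))"
      using exec that unfolding execution_def by simp
    moreover have "v ` {1..Suc K} = insert (v (Suc K)) (v ` {1..K})"
      by (auto simp: atLeastAtMostSuc_conv)
    ultimately show ?thesis using potential_step unfolding P_def J_def by simp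
  qed
  then have "P n + int (card {j \<in> {1..<n}. J j}) = P 1"
    using count_by_potential[OF \<open>n \<ge> 1\<close>] by blast
  moreover have "P n = 0"
  proof -
    have "v ` {1..n} = {1..n}" using execution_marks_all[OF exec \<open>n \<ge> 1\<close>] .
    moreover have "v n \<in> v ` {1..n}" using \<open>n \<ge> 1\<close> by simp
    ultimately show ?thesis using potential_final unfolding P_def by simp
  qed
  moreover have "P 1 = path_cost k"
    using exec potential_initial[OF assms(1)] unfolding P_def execution_def by simp
  moreover have "{1..n - 1} = {1..<n}" using \<open>n \<ge> 1\<close> by auto
  ultimately show ?thesis unfolding num_jumps_def J_def by simp
qed

end


(* The three expressions follow from path_cost k = sum of fseq i (i < k) + k,
   the defining recursion of fseq, and 3 path_cost k = n or n - 1. *)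
theorem mainTheorem5:
  fixes k n :: nat and v :: "nat \<Rightarrow> nat"
  assumes "k \<ge> 1"
    and "n = 2 ^ (k + 1) - 1"
    and "execution n 3 v"
  shows "num_jumps n 3 v = (\<Sum>i<k. fseq i) + k
       \<and> 2 * num_jumps n 3 v = fseq (k + 1)
       \<and> num_jumps n 3 v = n div 3"
proof -
  have jumps: "int (num_jumps n 3 v) = path_cost k"
    using num_jumps_eq_path_cost[OF assms(2) assms(1) assms(3)] .
  have sum_form: "num_jumps n 3 v = (\<Sum>i<k. fseq i) + k"
    using jumps unfolding path_cost_eq of_nat_eq_iff .
  moreover have "2 * num_jumps n 3 v = fseq (k + 1)"
    using sum_form by simp
  moreover have "num_jumps n 3 v = n div 3"
  proof -
    have "int n = 2 ^ (k + 1) - 1" using assms(2) by (simp add: of_nat_diff)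
    then have "int n = 3 * int (num_jumps n 3 v) + (if even k then 1 else 0)"
      using path_cost_closed_form[of k] jumps by simp
    then have "n = 3 * num_jumps n 3 v + (if even k then 1 else 0)"
      by (cases "even k") simp_all
    then show ?thesis by (cases "even k") simp_all
  qed
  ultimately show ?thesis by simp
qed

end
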